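(* Let $c>0$. There is a constant $C=C(c)$ such that the following holds. Let $H=(V,\mathcal{E})$ be a hypergraph with $|V|=n$ whose Delaunay graph is hereditarily $c$-linear, let $k=\max_{e\in\mathcal{E}}|e|$, and let $X=\{\{p,q\}: p,q\in V,\ p\ne q,\ p,q \text{ are friends}\}$. Then $|X|\le C\, n\, \max(k,1)$, i.e. $|X|=O(nk)$.
   Context: A hypergraph $H=(V,\mathcal{E})$ consists of a finite vertex set $V$ and a collection $\mathcal{E}$ of subsets of $V$ (hyperedges). For $S\subseteq V$, the induced subhypergraph is $H|_S=(S,\{e\cap S: e\in\mathcal{E}\})$. The Delaunay graph of a hypergraph $H=(V,\mathcal{E})$ is the graph on vertex set $V$ whose edges are the hyperedges $e\in\mathcal{E}$ with $|e|=2$. $H$ has a hereditarily $c$-linear Delaunay graph if for every nonempty $S\subseteq V$, the Delaunay graph $G_S$ of $H|_S$ satisfies $|E(G_S)|<c\,|S|$. Two vertices $u,v\in V$ are friends if there is some $e\in\mathcal{E}$ with $u,v\in e$. *)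

theory Defs
  imports Complex_Main
begin

definition hypergraph :: "'a set \<Rightarrow> 'a set set \<Rightarrow> bool" where
  "hypergraph V E \<longleftrightarrow> finite V \<and> (\<forall>e\<in>E. e \<subseteq> V)"

definition induced_edges :: "'a set set \<Rightarrow> 'a set \<Rightarrow> 'a set set" where
  "induced_edges E S = {e \<inter> S | e. e \<in> E}"

definition delaunay_edges :: "'a set set \<Rightarrow> 'a set set" where
  "delaunay_edges E = {e \<in> E. card e = 2}"

definition hered_c_linear :: "real \<Rightarrow> 'a set \<Rightarrow> 'a set set \<Rightarrow> bool" where
  "hered_c_linear c V E \<longleftrightarrow>
     (\<forall>S. S \<subseteq> V \<and> S \<noteq> {} \<longrightarrow>
        real (card (delaunay_edges (induced_edges E S))) < c * real (card S))"

definition friends :: "'a set set \<Rightarrow> 'a \<Rightarrow> 'a \<Rightarrow> bool" where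
  "friends E u v \<longleftrightarrow> (\<exists>e\<in>E. u \<in> e \<and> v \<in> e)"

definition max_edge_size :: "'a set set \<Rightarrow> nat" where
  "max_edge_size E = Max (insert 0 (card ` E))"

definition friend_pairs :: "'a set \<Rightarrow> 'a set set \<Rightarrow> 'a set set" where
  "friend_pairs V E = {{p, q} | p q. p \<in> V \<and> q \<in> V \<and> p \<noteq> q \<and> friends E p q}"

end

theory Submission
  imports Defs "HOL-Library.FuncSet"
begin

text \<open>
  Colour the vertices with k = max |e| colours uniformly at random and let S be the class of
  colour 0. A friend pair {u, v} with witnessing hyperedge e is an edge of the Delaunay graph
  of H|S as soon as u and v get colour 0 and the other vertices of e do not, which happens with
  probability at least k^-2 (1 - 1/k)^(k-2) >= 1 / (e k^2). Since S has expected size n/k and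
  the Delaunay graph of H|S has at most c |S| edges, there are at most e c n k friend pairs.
  Expectations are expressed by counting all k^n colourings.
\<close>

lemma finite_delaunay_edges_induced:
  "finite E \<Longrightarrow> finite (delaunay_edges (induced_edges E S))"
  unfolding delaunay_edges_def induced_edges_def by (simp add: setcompr_eq_image)

lemma hered_c_linear_le:
  assumes "hered_c_linear c V E" "S \<subseteq> V"
  shows "real (card (delaunay_edges (induced_edges E S))) \<le> c * real (card S)"
proof (cases "S = {}")
  case True
  then have "delaunay_edges (induced_edges E S) = {}"
    unfolding delaunay_edges_def induced_edges_def by auto
  with True show ?thesis by simp
next
  case False
  with assms show ?thesis unfolding hered_c_linear_def by (simp add: less_imp_le)
qed

lemma finite_edges: "hypergraph V E \<Longrightarrow> finite E"
  unfolding hypergraph_def by (meson Pow_iff finite_Pow_iff rev_finite_subset subsetI)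

lemma card_le_max_edge_size: "finite E \<Longrightarrow> e \<in> E \<Longrightarrow> card e \<le> max_edge_size E"
  unfolding max_edge_size_def by simp

lemma max_edge_size_le_card:
  assumes "hypergraph V E"
  shows "max_edge_size E \<le> card V"
  using assms finite_edges[OF assms] unfolding hypergraph_def max_edge_size_def
  by (auto intro: card_mono)

lemma friend_pairsE:
  assumes "P \<in> friend_pairs V E"
  obtains u v e where "P = {u, v}" "u \<noteq> v" "u \<in> e" "v \<in> e" "e \<in> E"
  using assms unfolding friend_pairs_def friends_def by auto

lemma two_le_card_hyperedge:
  assumes "hypergraph V E" "e \<in> E" "u \<in> e" "v \<in> e" "u \<noteq> v"
  shows "2 \<le> card e"
proof -
  have "finite e" using assms(1,2) unfolding hypergraph_def by (meson rev_finite_subset)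
  moreover have "card {u, v} = 2" using assms(5) by simp
  ultimately show ?thesis using card_mono[of e "{u, v}"] assms(3,4) by simp
qed

lemma friend_pairs_nonempty_imp_max_edge_size_ge_2:
  assumes "hypergraph V E" "friend_pairs V E \<noteq> {}"
  shows "2 \<le> max_edge_size E"
proof -
  obtain u v e where "u \<noteq> v" "u \<in> e" "v \<in> e" "e \<in> E"
    using assms(2) by (blast elim: friend_pairsE)
  then have "2 \<le> card e" using two_le_card_hyperedge[OF assms(1)] by blast
  also have "\<dots> \<le> max_edge_size E"
    using card_le_max_edge_size[OF finite_edges[OF assms(1)] \<open>e \<in> E\<close>] .
  finally show ?thesis .
qed

lemma sum_card_filter_swap:
  assumes "finite A" "finite B"
  shows "(\<Sum>x\<in>A. card {y \<in> B. R x y}) = (\<Sum>y\<in>B. card {x \<in> A. R x y})"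
  using sum.swap_restrict[OF assms, of "\<lambda>_ _. 1::nat" R] by simp

lemma card_colourings_zero_on_nonzero_on:
  fixes k :: nat
  assumes "finite V" "T \<subseteq> V" "Z \<subseteq> T" "0 < k"
  shows "card {f \<in> V \<rightarrow>\<^sub>E {..<k}. (\<forall>w\<in>Z. f w = 0) \<and> (\<forall>w\<in>T - Z. f w \<noteq> 0)}
           = (k - 1) ^ card (T - Z) * k ^ card (V - T)"
proof -
  let ?colours = "\<lambda>x. if x \<in> Z then {0} else if x \<in> T then {1..<k} else {..<k}"
  have "{f \<in> V \<rightarrow>\<^sub>E {..<k}. (\<forall>w\<in>Z. f w = 0) \<and> (\<forall>w\<in>T - Z. f w \<noteq> 0)} = PiE V ?colours"
    (is "?L = _")
  proof (intro set_eqI iffI)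
    fix f assume "f \<in> ?L"
    then show "f \<in> PiE V ?colours" by (auto simp: PiE_iff Suc_le_eq)
  next
    fix f assume f: "f \<in> PiE V ?colours"
    then have "f x \<in> ?colours x" if "x \<in> V" for x
      using that by (simp add: PiE_iff)
    then have "\<forall>x\<in>V. f x < k" "\<forall>w\<in>Z. f w = 0" "\<forall>w\<in>T - Z. f w \<noteq> 0"
      using assms by (fastforce split: if_splits)+
    with f show "f \<in> ?L" by (simp add: PiE_iff)
  qed
  then have "card ?L = (\<Prod>x\<in>V. card (?colours x))"
    using assms(1) by (simp only: card_PiE)
  also have "\<dots> = (\<Prod>x\<in>V. if x \<in> Z then 1 else if x \<in> T then k - 1 else k)"
    by (rule prod.cong) auto
  also have "\<dots> = (k - 1) ^ card (T - Z) * k ^ card (V - T)"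
  proof -
    have "V \<inter> - Z \<inter> {x. x \<in> T} = T - Z" "V \<inter> - Z \<inter> - {x. x \<in> T} = V - T"
      using assms(2,3) by auto
    then show ?thesis
      using assms(1) by (simp add: prod.If_cases Int_assoc mult.commute)
  qed
  finally show ?thesis .
qed

lemma delaunay_edge_of_zero_class:
  assumes "hypergraph V E" "e \<in> E" "u \<in> e" "v \<in> e" "u \<noteq> v"
    and "f u = 0" "f v = 0" "\<forall>w\<in>e - {u, v}. f w \<noteq> 0"
  shows "{u, v} \<in> delaunay_edges (induced_edges E {w \<in> V. f w = 0})"
proof -
  have "e \<subseteq> V" using assms(1,2) unfolding hypergraph_def by blast
  with assms(3-) have "e \<inter> {w \<in> V. f w = 0} = {u, v}" by blast
  with assms(2,5) show ?thesis
    unfolding delaunay_edges_def induced_edges_def by auto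
qed

lemma card_colourings_keeping_friend_pair:
  fixes k :: nat
  assumes "hypergraph V E" "e \<in> E" "u \<in> e" "v \<in> e" "u \<noteq> v" "0 < k"
  shows "(k - 1) ^ (card e - 2) * k ^ (card V - card e)
           \<le> card {f \<in> V \<rightarrow>\<^sub>E {..<k}. {u, v} \<in> delaunay_edges (induced_edges E {w \<in> V. f w = 0})}"
proof -
  have V: "finite V" "e \<subseteq> V" using assms(1,2) unfolding hypergraph_def by auto
  have uv: "{u, v} \<subseteq> e" using assms(3,4) by blast
  have "(k - 1) ^ (card e - 2) * k ^ (card V - card e)
      = card {f \<in> V \<rightarrow>\<^sub>E {..<k}. (\<forall>w\<in>{u, v}. f w = 0) \<and> (\<forall>w\<in>e - {u, v}. f w \<noteq> 0)}"
    using card_colourings_zero_on_nonzero_on[OF V uv assms(6)] V uv assms(5)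
    by (simp add: card_Diff_subset finite_subset numeral_2_eq_2)
  also have "\<dots> \<le> card {f \<in> V \<rightarrow>\<^sub>E {..<k}. {u, v} \<in> delaunay_edges (induced_edges E {w \<in> V. f w = 0})}"
    using V(1) by (intro card_mono) (auto simp: finite_PiE intro: delaunay_edge_of_zero_class[OF assms(1-5)])
  finally show ?thesis .
qed

lemma sum_card_zero_class:
  fixes k :: nat
  assumes "finite V" "0 < k"
  shows "(\<Sum>f\<in>V \<rightarrow>\<^sub>E {..<k}. card {w \<in> V. f w = 0}) = card V * k ^ (card V - 1)"
proof -
  have "card {f \<in> V \<rightarrow>\<^sub>E {..<k}. f w = 0} = k ^ (card V - 1)" if "w \<in> V" for w
    using card_colourings_zero_on_nonzero_on[of V "{w}" "{w}" k] assms that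
    by (simp add: card_Diff_singleton)
  then show ?thesis
    using sum_card_filter_swap[of "V \<rightarrow>\<^sub>E {..<k}" V "\<lambda>f w. f w = 0"] assms(1)
    by (simp add: finite_PiE)
qed

lemma pred_power_mult_power_le:
  fixes j k n :: nat
  assumes "2 \<le> j" "j \<le> k" "k \<le> n"
  shows "(k - 1) ^ (k - 2) * k ^ (n - k) \<le> (k - 1) ^ (j - 2) * k ^ (n - j)"
proof -
  have "k - 2 = (j - 2) + (k - j)" "n - j = (k - j) + (n - k)" using assms by auto
  then have "(k - 1) ^ (k - 2) * k ^ (n - k) = (k - 1) ^ (j - 2) * ((k - 1) ^ (k - j) * k ^ (n - k))"
    and "(k - 1) ^ (j - 2) * k ^ (n - j) = (k - 1) ^ (j - 2) * (k ^ (k - j) * k ^ (n - k))"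
    by (simp_all only: power_add mult.assoc)
  moreover have "(k - 1) ^ (k - j) \<le> k ^ (k - j)" by (rule power_mono) auto
  ultimately show ?thesis by (simp only:) (intro mult_le_mono2 mult_le_mono1)
qed

lemma friend_pairs_colouring_count:
  fixes k :: nat
  assumes hyp: "hypergraph V E" and lin: "hered_c_linear c V E"
    and edges_le: "\<And>e. e \<in> E \<Longrightarrow> card e \<le> k" and "2 \<le> k" "k \<le> card V"
  shows "real (card (friend_pairs V E)) * real ((k - 1) ^ (k - 2) * k ^ (card V - k))
           \<le> c * real (card V * k ^ (card V - 1))"
proof -
  define n where "n = card V"
  define F where "F = V \<rightarrow>\<^sub>E {..<k}"
  define Del where "Del f = delaunay_edges (induced_edges E {w \<in> V. f w = 0})" for f :: "'a \<Rightarrow> nat"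
  define X where "X = friend_pairs V E"
  define B where "B = (k - 1) ^ (k - 2) * k ^ (n - k)"
  have finV: "finite V" and finE: "finite E" using hyp finite_edges unfolding hypergraph_def by auto
  have finF: "finite F" unfolding F_def using finV by (simp add: finite_PiE)
  have finX: "finite X"
    using finV unfolding X_def friend_pairs_def by (rule rev_finite_subset[OF finite_Pow_iff[THEN iffD2]]) auto
  have B_le: "B \<le> card {f \<in> F. P \<in> Del f}" if P: "P \<in> X" for P
  proof -
    obtain u v e where uv: "P = {u, v}" "u \<noteq> v" "u \<in> e" "v \<in> e" "e \<in> E"
      using P unfolding X_def by (rule friend_pairsE)
    have "2 \<le> card e" using two_le_card_hyperedge[OF hyp uv(5,3,4,2)] .
    moreover have "card e \<le> k" using edges_le uv(5) .
    ultimately have "B \<le> (k - 1) ^ (card e - 2) * k ^ (n - card e)"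
      unfolding B_def n_def using \<open>k \<le> card V\<close> by (rule pred_power_mult_power_le)
    also have "\<dots> \<le> card {f \<in> F. P \<in> Del f}"
      unfolding F_def Del_def n_def uv(1)
      using card_colourings_keeping_friend_pair[OF hyp uv(5,3,4,2)] \<open>2 \<le> k\<close> by simp
    finally show ?thesis .
  qed
  have "card X * B \<le> (\<Sum>P\<in>X. card {f \<in> F. P \<in> Del f})"
    using sum_mono[OF B_le] by simp
  also have "\<dots> = (\<Sum>f\<in>F. card {P \<in> X. P \<in> Del f})"
    by (rule sum_card_filter_swap[OF finX finF])
  also have "\<dots> \<le> (\<Sum>f\<in>F. card (Del f))"
    unfolding Del_def by (intro sum_mono card_mono finite_delaunay_edges_induced[OF finE]) auto
  finally have "real (card X * B) \<le> (\<Sum>f\<in>F. real (card (Del f)))"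
    unfolding of_nat_sum[symmetric] of_nat_le_iff .
  also have "\<dots> \<le> (\<Sum>f\<in>F. c * real (card {w \<in> V. f w = 0}))"
    unfolding Del_def by (intro sum_mono hered_c_linear_le[OF lin]) auto
  also have "\<dots> = c * real (n * k ^ (n - 1))"
    using sum_card_zero_class[OF finV, of k] \<open>2 \<le> k\<close>
    by (simp add: F_def n_def flip: sum_distrib_left of_nat_sum)
  finally show ?thesis unfolding X_def B_def n_def by simp
qed

lemma power_le_exp_one_mult_power:
  assumes "2 \<le> k"
  shows "real k ^ (k - 2) \<le> exp 1 * real (k - 1) ^ (k - 2)"
proof -
  define m where "m = k - 1"
  have m: "0 < m" "k = m + 1" "k - 2 = m - 1" using assms unfolding m_def by auto
  have "(1 + 1 / real m) ^ (m - 1) \<le> (1 + 1 / real m) ^ m"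
    by (rule power_increasing) auto
  also have "\<dots> \<le> exp 1"
    using exp_ge_one_plus_x_over_n_power_n[of m 1] m(1) by simp
  finally have "(real k / real m) ^ (k - 2) \<le> exp 1"
    using m by (simp add: field_simps)
  then show ?thesis
    using m(1) by (simp add: power_divide divide_le_eq m_def)
qed

lemma le_exp_one_mult_from_colouring_count:
  fixes k n :: nat
  assumes count: "x * real ((k - 1) ^ (k - 2) * k ^ (n - k)) \<le> c * real (n * k ^ (n - 1))"
    and "2 \<le> k" "k \<le> n" "0 \<le> c"
  shows "x \<le> exp 1 * c * real n * real k"
proof -
  define B where "B = real ((k - 1) ^ (k - 2) * k ^ (n - k))"
  have "B > 0" unfolding B_def using assms(2) by simp
  have "real k ^ (n - 1) = real k * (real k ^ (k - 2) * real k ^ (n - k))"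
    using assms(2,3) by (simp flip: power_add power_Suc)
  then have "c * real (n * k ^ (n - 1)) = c * real n * real k * (real k ^ (k - 2) * real k ^ (n - k))"
    by simp
  also have "\<dots> \<le> c * real n * real k * (exp 1 * B)"
  proof -
    have "real k ^ (k - 2) * real k ^ (n - k) \<le> exp 1 * real (k - 1) ^ (k - 2) * real k ^ (n - k)"
      by (rule mult_right_mono[OF power_le_exp_one_mult_power[OF assms(2)]]) simp
    then show ?thesis
      unfolding B_def using assms(4) by (intro mult_left_mono) (auto simp: mult.assoc)
  qed
  finally have "x * B \<le> (exp 1 * c * real n * real k) * B"
    using count unfolding B_def by (simp add: mult_ac)
  with \<open>B > 0\<close> show ?thesis by simp
qed

theorem mainTheorem2:
  fixes c :: real
  assumes "c > 0"
  shows "\<exists>C::real. \<forall>(V::nat set) (E::nat set set).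
           hypergraph V E \<and> hered_c_linear c V E \<longrightarrow>
           real (card (friend_pairs V E))
             \<le> C * real (card V) * real (max 1 (max_edge_size E))"
proof (intro exI allI impI)
  fix V :: "nat set" and E :: "nat set set"
  assume "hypergraph V E \<and> hered_c_linear c V E"
  then have hyp: "hypergraph V E" and lin: "hered_c_linear c V E" by auto
  show "real (card (friend_pairs V E)) \<le> exp 1 * c * real (card V) * real (max 1 (max_edge_size E))"
  proof (cases "friend_pairs V E = {}")
    case True
    with assms show ?thesis by simp
  next
    case False
    define k where "k = max_edge_size E"
    have k: "2 \<le> k" "k \<le> card V"
      using friend_pairs_nonempty_imp_max_edge_size_ge_2[OF hyp False] max_edge_size_le_card[OF hyp]
      unfolding k_def by auto
    have "\<And>e. e \<in> E \<Longrightarrow> card e \<le> k"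
      unfolding k_def using card_le_max_edge_size[OF finite_edges[OF hyp]] .
    from friend_pairs_colouring_count[OF hyp lin this k]
    have "real (card (friend_pairs V E)) \<le> exp 1 * c * real (card V) * real k"
      using k assms by (intro le_exp_one_mult_from_colouring_count) auto
    with k show ?thesis unfolding k_def by simp
  qed
qed

end
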